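(* Let $0 < \kappa < 1$ and $\lambda = \sqrt{1 - \kappa^2}$. Let $w$ be a solution, holomorphic near $0$, of the differential equation $(w')^2 = T_6(w) - (1 - 2\kappa^2)$ with $w(0) = 0$, and put $W = 2w^2 - 1$. Then $W$ (extends to) the elliptic function determined by $$(1 + W)(6 - P) = 4 \lambda^2,$$ where $P = \wp(\,\cdot\,; G_2, G_3)$ is the Weierstrass function with invariants $G_2 = 48(1 + 8\kappa^2)$ and $G_3 = 64(1 - 20\kappa^2 - 8\kappa^4)$.
   Context: $T_6$ is the degree six Chebyshev polynomial of the first kind, $T_6(\cos t) = \cos 6t$. $\wp(\,\cdot\,; g_2, g_3)$ denotes the Weierstrass elliptic function with invariants $g_2, g_3$, i.e. the solution of $(\wp')^2 = 4\wp^3 - g_2 \wp - g_3$ with a double pole at $0$ (principal part $z^{-2}$). *)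

theory Defs
  imports "HOL-Complex_Analysis.Complex_Analysis"
begin

fun cheb_T :: "nat \<Rightarrow> 'a::comm_ring_1 \<Rightarrow> 'a" where
  "cheb_T 0 x = 1"
| "cheb_T (Suc 0) x = x"
| "cheb_T (Suc (Suc n)) x = 2 * x * cheb_T (Suc n) x - cheb_T n x"

text \<open>P agrees near 0 with the Weierstrass function with invariants g2, g3:
  it is holomorphic on a punctured disc around 0, solves
  (P')^2 = 4 P^3 - g2 P - g3 there, and has a double pole at 0 with principal
  part z^(-2), i.e. P z - 1/z^2 has a finite limit at 0.\<close>
definition is_weierstrass_p_germ :: "complex \<Rightarrow> complex \<Rightarrow> (complex \<Rightarrow> complex) \<Rightarrow> bool" where
  "is_weierstrass_p_germ g2 g3 P \<longleftrightarrow>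
     (\<exists>r>0. P holomorphic_on (ball 0 r - {0}) \<and>
        (\<forall>z \<in> ball 0 r - {0}. (deriv P z)^2 = 4 * (P z)^3 - g2 * P z - g3) \<and>
        (\<exists>c. ((\<lambda>z. P z - 1 / z^2) \<longlongrightarrow> c) (at 0)))"

end

theory Submission
  imports Defs
begin

text \<open>Since \<open>w 0 = 0\<close> and \<open>w'(0)\<^sup>2 = T\<^sub>6(0) - (1 - 2\<kappa>\<^sup>2) = -2\<lambda>\<^sup>2 \<noteq> 0\<close>, near 0 the equation
  \<open>(w')\<^sup>2 = T\<^sub>6(w) - (1 - 2\<kappa>\<^sup>2)\<close> is equivalent to a regular holomorphic ODE \<open>w' = F(w)\<close> for a
  branch \<open>F\<close> of the square root, so its solution is determined by \<open>w(0)\<close> and \<open>w'(0)\<close>.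
  The function \<open>v\<close> defined by \<open>v\<^sup>2 (6 - P) = 2\<lambda>\<^sup>2\<close>, \<open>v(0) = 0\<close>, \<open>v'(0) = w'(0)\<close> solves the
  same equation: differentiating the relation gives \<open>4\<lambda>\<^sup>2 v' = v\<^sup>3 P'\<close>, and squaring and
  inserting the Weierstrass equation for \<open>P\<close> turns \<open>(P')\<^sup>2\<close> into a multiple of
  \<open>T\<^sub>6(v) - (1 - 2\<kappa>\<^sup>2)\<close>. Hence \<open>w = v\<close> near 0, and \<open>1 + W = 2w\<^sup>2\<close>.\<close>

text \<open>The \<open>n\<close>-th derivative of a solution of \<open>f' = F \<circ> f\<close>, as a function of the current
  value \<open>f z\<close>: iterate the Lie derivative \<open>h \<mapsto> h' F\<close> on the identity.\<close>

definition flow_higher_deriv :: "(complex \<Rightarrow> complex) \<Rightarrow> nat \<Rightarrow> complex \<Rightarrow> complex" where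
  "flow_higher_deriv F n = ((\<lambda>h y. deriv h y * F y) ^^ n) (\<lambda>y. y)"

lemma holomorphic_flow_higher_deriv:
  assumes "open S" and "F holomorphic_on S"
  shows "flow_higher_deriv F n holomorphic_on S"
  using assms by (induction n) (auto simp: flow_higher_deriv_def intro!: holomorphic_intros holomorphic_deriv)

lemma higher_deriv_autonomous_ode:
  fixes f F :: "complex \<Rightarrow> complex"
  assumes S: "open S" "F holomorphic_on S" and B: "open B" "f holomorphic_on B"
    and sol: "\<And>z. z \<in> B \<Longrightarrow> f z \<in> S \<and> deriv f z = F (f z)"
    and z: "z \<in> B"
  shows "(deriv ^^ n) f z = flow_higher_deriv F n (f z)"
  using z
proof (induction n arbitrary: z)
  case 0
  then show ?case by (simp add: flow_higher_deriv_def)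
next
  case (Suc n)
  define G where "G = flow_higher_deriv F n"
  have "(deriv ^^ Suc n) f z = deriv (G \<circ> f) z"
    using Suc.IH eventually_nhds_in_open[OF B(1) Suc.prems]
    by (auto simp: G_def intro!: deriv_cong_ev elim!: eventually_mono)
  also have "\<dots> = deriv G (f z) * deriv f z"
    using Suc.prems B S sol holomorphic_flow_higher_deriv[OF S, of n]
    by (intro deriv_chain) (auto simp: G_def intro: holomorphic_on_imp_differentiable_at)
  also have "\<dots> = flow_higher_deriv F (Suc n) (f z)"
    using sol[OF Suc.prems] by (simp add: G_def flow_higher_deriv_def)
  finally show ?case .
qed

lemma autonomous_ode_unique_on_ball:
  fixes f g F :: "complex \<Rightarrow> complex"
  assumes S: "open S" "F holomorphic_on S"
    and hol: "f holomorphic_on ball a r" "g holomorphic_on ball a r"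
    and f_sol: "\<And>z. z \<in> ball a r \<Longrightarrow> f z \<in> S \<and> deriv f z = F (f z)"
    and g_sol: "\<And>z. z \<in> ball a r \<Longrightarrow> g z \<in> S \<and> deriv g z = F (g z)"
    and "f a = g a" and "z \<in> ball a r"
  shows "f z = g z"
proof (rule holomorphic_fun_eq_on_ball[OF hol \<open>z \<in> ball a r\<close>])
  have "a \<in> ball a r" using \<open>z \<in> ball a r\<close> by (auto intro: le_less_trans[OF zero_le_dist])
  then show "(deriv ^^ n) f a = (deriv ^^ n) g a" for n
    using higher_deriv_autonomous_ode[OF S open_ball hol(1) f_sol]
      higher_deriv_autonomous_ode[OF S open_ball hol(2) g_sol] \<open>f a = g a\<close>
    by simp
qed

lemma eventually_deriv_eq_csqrt:
  fixes f :: "complex \<Rightarrow> complex"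
  assumes "f holomorphic_on ball z0 r" and "r > 0" and nonzero: "deriv f z0 \<noteq> 0"
  shows "\<forall>\<^sub>F z in nhds z0. 0 < Re ((deriv f z / deriv f z0)^2) \<and>
           deriv f z = deriv f z0 * csqrt ((deriv f z / deriv f z0)^2)"
proof -
  define u where "u z = deriv f z / deriv f z0" for z
  have "continuous_on (ball z0 r) u"
    unfolding u_def using assms
    by (intro holomorphic_on_imp_continuous_on holomorphic_intros holomorphic_deriv) auto
  then have "isCont u z0"
    using \<open>r > 0\<close> by (simp add: continuous_on_eq_continuous_at)
  then have "(u \<longlongrightarrow> 1) (nhds z0)"
    using nonzero by (simp add: tendsto_nhds_iff isCont_def u_def)
  then have "((\<lambda>z. Re (u z)) \<longlongrightarrow> 1) (nhds z0)" "((\<lambda>z. Re (u z ^ 2)) \<longlongrightarrow> 1) (nhds z0)"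
    by (auto intro!: tendsto_eq_intros)
  then have "\<forall>\<^sub>F z in nhds z0. 0 < Re (u z) \<and> 0 < Re (u z ^ 2)"
    by (intro eventually_conj order_tendstoD(1)) auto
  then show ?thesis
  proof eventually_elim
    case (elim z)
    then show ?case using nonzero by (simp add: csqrt_square u_def)
  qed
qed

lemma square_ode_unique_near:
  fixes f g H :: "complex \<Rightarrow> complex"
  assumes H: "H holomorphic_on UNIV" and "r > 0"
    and hol: "f holomorphic_on ball z0 r" "g holomorphic_on ball z0 r"
    and f_sol: "\<And>z. z \<in> ball z0 r \<Longrightarrow> (deriv f z)^2 = H (f z)"
    and g_sol: "\<And>z. z \<in> ball z0 r \<Longrightarrow> (deriv g z)^2 = H (g z)"
    and "f z0 = g z0" and deriv_eq: "deriv f z0 = deriv g z0" and nonzero: "deriv f z0 \<noteq> 0"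
  shows "\<forall>\<^sub>F z in nhds z0. f z = g z"
proof -
  define c where "c = deriv f z0"
  define S where "S = {y. 0 < Re (H y / c^2)}"
  \<comment> \<open>principal branch: \<open>f'/c\<close> and \<open>g'/c\<close> stay close to 1\<close>
  define F where "F y = c * csqrt (H y / c^2)" for y
  have "open S"
    unfolding S_def c_def using H nonzero
    by (intro open_Collect_less continuous_intros holomorphic_on_imp_continuous_on) auto
  have "F holomorphic_on S"
    unfolding F_def S_def using H
    by (intro holomorphic_intros holomorphic_on_csqrt')
       (auto simp: complex_nonpos_Reals_iff intro: holomorphic_on_subset)
  have "\<forall>\<^sub>F z in nhds z0. z \<in> ball z0 r \<and> (f z \<in> S \<and> deriv f z = F (f z))
                               \<and> (g z \<in> S \<and> deriv g z = F (g z))"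
    using eventually_nhds_ball[OF \<open>r > 0\<close>] eventually_deriv_eq_csqrt[OF hol(1) \<open>r > 0\<close> nonzero]
      eventually_deriv_eq_csqrt[OF hol(2) \<open>r > 0\<close> nonzero[unfolded deriv_eq]]
    by eventually_elim
       (auto simp: S_def F_def c_def power_divide f_sol g_sol simp flip: deriv_eq)
  then obtain e where "e > 0" and e: "\<And>z. z \<in> ball z0 e \<Longrightarrow> z \<in> ball z0 r \<and>
      (f z \<in> S \<and> deriv f z = F (f z)) \<and> (g z \<in> S \<and> deriv g z = F (g z))"
    unfolding eventually_nhds_metric by (auto simp: dist_commute)
  have "f z = g z" if "z \<in> ball z0 e" for z
  proof (rule autonomous_ode_unique_on_ball[OF \<open>open S\<close> \<open>F holomorphic_on S\<close>,
                                           where f = f and g = g and a = z0 and r = e])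
    show "f holomorphic_on ball z0 e" "g holomorphic_on ball z0 e"
      using e hol by (auto intro: holomorphic_on_subset)
  qed (use e \<open>f z0 = g z0\<close> that in auto)
  then show ?thesis
    using eventually_nhds_ball[OF \<open>e > 0\<close>, of z0] by (blast intro: eventually_mono)
qed

lemma cheb_T_6: "cheb_T 6 x = 32 * x^6 - 48 * x^4 + 18 * x^2 - 1"
  by (simp add: numeral_eq_Suc algebra_simps power2_eq_square power_numeral_reduce)

lemma removable_double_pole:
  fixes P :: "complex \<Rightarrow> complex"
  assumes hol: "P holomorphic_on ball 0 r - {0}" and lim: "((\<lambda>z. P z - 1 / z^2) \<longlongrightarrow> c) (at 0)"
  shows "(\<lambda>z. if z = 0 then 1 else z^2 * P z) holomorphic_on ball 0 r"
    (is "?R holomorphic_on _")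
proof (rule no_isolated_singularity'[where K = "{0}"])
  have "((\<lambda>z. 1 + z^2 * (P z - 1 / z^2)) \<longlongrightarrow> 1 + 0^2 * c) (at 0)"
    by (intro tendsto_intros lim)
  moreover have "\<forall>\<^sub>F z in at 0. 1 + z^2 * (P z - 1 / z^2) = ?R z"
    unfolding eventually_at_filter by (auto simp: field_simps)
  ultimately have "(?R \<longlongrightarrow> ?R 0) (at 0)"
    by (simp add: tendsto_cong)
  then show "(?R \<longlongrightarrow> ?R z) (at z within ball 0 r)" if "z \<in> {0}" for z
    using that by (auto intro: tendsto_within_subset)
  have "(\<lambda>z. z^2 * P z) holomorphic_on ball 0 r - {0}"
    by (intro holomorphic_intros hol)
  then show "?R holomorphic_on ball 0 r - {0}"
    by (rule holomorphic_transform) auto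
qed auto

lemma weierstrass_chebyshev_identity:
  fixes v p k :: "'a::idom"
  assumes "p * v^2 = 6 * v^2 - 2 * (1 - k^2)"
  shows "v^6 * (4 * p^3 - 48 * (1 + 8 * k^2) * p - 64 * (1 - 20 * k^2 - 8 * k^4))
           = 4 * (2 * (1 - k^2))^2 * (cheb_T 6 v - (1 - 2 * k^2))"
proof -
  have "v^6 * (4 * p^3 - 48 * (1 + 8 * k^2) * p - 64 * (1 - 20 * k^2 - 8 * k^4))
     = 4 * (p * v^2)^3 - 48 * (1 + 8 * k^2) * (p * v^2) * v^4 - 64 * (1 - 20 * k^2 - 8 * k^4) * v^6"
    by algebra
  also have "\<dots> = 4 * (6 * v^2 - 2 * (1 - k^2))^3
      - 48 * (1 + 8 * k^2) * (6 * v^2 - 2 * (1 - k^2)) * v^4 - 64 * (1 - 20 * k^2 - 8 * k^4) * v^6"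
    by (simp only: assms)
  also have "\<dots> = 4 * (2 * (1 - k^2))^2 * (cheb_T 6 v - (1 - 2 * k^2))"
    unfolding cheb_T_6 by algebra
  finally show ?thesis .
qed

lemma chebyshev_ode_from_weierstrass:
  fixes P v :: "complex \<Rightarrow> complex" and k :: complex
  assumes "open U" and hol: "P holomorphic_on U" "v holomorphic_on U"
    and P_ode: "\<And>z. z \<in> U \<Longrightarrow>
      (deriv P z)^2 = 4 * P z^3 - 48 * (1 + 8 * k^2) * P z - 64 * (1 - 20 * k^2 - 8 * k^4)"
    and rel: "\<And>z. z \<in> U \<Longrightarrow> v z^2 * (6 - P z) = 2 * (1 - k^2)"
    and "k^2 \<noteq> 1" and "z \<in> U"
  shows "(deriv v z)^2 = cheb_T 6 (v z) - (1 - 2 * k^2)"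
proof -
  define a where "a = 2 * (1 - k^2)"
  have "a \<noteq> 0"
    using \<open>k^2 \<noteq> 1\<close> by (simp add: a_def)
  have "((\<lambda>z. v z^2 * (6 - P z)) has_field_derivative
          2 * v z * deriv v z * (6 - P z) - v z^2 * deriv P z) (at z)"
    using hol \<open>open U\<close> \<open>z \<in> U\<close>
    by (auto intro!: derivative_eq_intros holomorphic_derivI)
  moreover have "((\<lambda>z. v z^2 * (6 - P z)) has_field_derivative 0) (at z)"
    by (rule has_field_derivative_transform_within_open[OF DERIV_const \<open>open U\<close> \<open>z \<in> U\<close>])
       (simp add: rel)
  ultimately have "2 * v z * deriv v z * (6 - P z) - v z^2 * deriv P z = 0"
    by (rule DERIV_unique)
  then have product_rule: "2 * v z * deriv v z * (6 - P z) = v z^2 * deriv P z"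
    by simp
  have "2 * a * deriv v z = 2 * deriv v z * (v z^2 * (6 - P z))"
    using rel[OF \<open>z \<in> U\<close>] by (simp add: a_def)
  also have "\<dots> = v z * (2 * v z * deriv v z * (6 - P z))"
    by (simp add: power2_eq_square algebra_simps)
  also have "\<dots> = v z^3 * deriv P z"
    by (simp add: product_rule power2_eq_square power3_eq_cube)
  finally have "(2 * a * deriv v z)^2 = (v z^3 * deriv P z)^2"
    by simp
  then have "4 * a^2 * (deriv v z)^2 = v z^6 * (deriv P z)^2"
    by (simp add: power_mult_distrib flip: power_mult)
  also have "\<dots> = v z^6 * (4 * P z^3 - 48 * (1 + 8 * k^2) * P z - 64 * (1 - 20 * k^2 - 8 * k^4))"
    by (simp add: P_ode \<open>z \<in> U\<close>)
  also have "\<dots> = 4 * a^2 * (cheb_T 6 (v z) - (1 - 2 * k^2))"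
  proof (rule weierstrass_chebyshev_identity[of "P z" "v z" k, folded a_def])
    show "P z * v z^2 = 6 * v z^2 - a"
      using rel[OF \<open>z \<in> U\<close>] by (simp add: a_def algebra_simps)
  qed
  finally show ?thesis
    using \<open>a \<noteq> 0\<close> by simp
qed

lemma holomorphic_csqrt_near_one:
  fixes Q :: "complex \<Rightarrow> complex"
  assumes "Q holomorphic_on ball z0 r" and "r > 0" and "Q z0 = 1"
  obtains \<rho> where "0 < \<rho>" "\<rho> \<le> r" "(\<lambda>z. csqrt (Q z)) holomorphic_on ball z0 \<rho>"
    "\<And>z. z \<in> ball z0 \<rho> \<Longrightarrow> csqrt (Q z) \<noteq> 0"
proof -
  have "continuous_on (ball z0 r) Q"
    using assms(1) by (rule holomorphic_on_imp_continuous_on)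
  then have "isCont Q z0"
    using \<open>r > 0\<close> by (simp add: continuous_on_eq_continuous_at)
  then have "((\<lambda>z. Re (Q z)) \<longlongrightarrow> 1) (nhds z0)"
    using assms by (auto simp: tendsto_nhds_iff isCont_def intro!: tendsto_eq_intros)
  then have "\<forall>\<^sub>F z in nhds z0. 0 < Re (Q z)"
    by (rule order_tendstoD) simp
  then obtain \<rho> where "0 < \<rho>" and pos: "\<And>z. z \<in> ball z0 \<rho> \<Longrightarrow> 0 < Re (Q z)"
    unfolding eventually_nhds_metric by (auto simp: dist_commute)
  show ?thesis
  proof
    show "0 < min \<rho> r" "min \<rho> r \<le> r"
      using \<open>0 < \<rho>\<close> \<open>r > 0\<close> by auto
    show "(\<lambda>z. csqrt (Q z)) holomorphic_on ball z0 (min \<rho> r)"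
    proof (rule holomorphic_on_csqrt')
      show "Q holomorphic_on ball z0 (min \<rho> r)"
        using assms(1) by (rule holomorphic_on_subset) auto
      show "Q z \<notin> \<real>\<^sub>\<le>\<^sub>0" if "z \<in> ball z0 (min \<rho> r)" for z
        using pos[of z] that by (auto simp: complex_nonpos_Reals_iff)
    qed
    show "csqrt (Q z) \<noteq> 0" if "z \<in> ball z0 (min \<rho> r)" for z
      using pos[of z] that by auto
  qed
qed

lemma chebyshev_solution_from_weierstrass:
  fixes P :: "complex \<Rightarrow> complex" and k c :: complex
  assumes "is_weierstrass_p_germ (48 * (1 + 8 * k^2)) (64 * (1 - 20 * k^2 - 8 * k^4)) P"
    and c: "c^2 = - 2 * (1 - k^2)" and "k^2 \<noteq> 1"
  obtains \<rho> v where "\<rho> > 0" "v holomorphic_on ball 0 \<rho>" "v 0 = 0" "deriv v 0 = c"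
    "\<And>z. z \<in> ball 0 \<rho> \<Longrightarrow> (deriv v z)^2 = cheb_T 6 (v z) - (1 - 2 * k^2)"
    "\<And>z. z \<in> ball 0 \<rho> - {0} \<Longrightarrow> v z^2 * (6 - P z) = 2 * (1 - k^2)"
proof -
  obtain r C where "r > 0" and hol_P: "P holomorphic_on ball 0 r - {0}"
    and P_ode: "\<And>z. z \<in> ball 0 r - {0} \<Longrightarrow>
      (deriv P z)^2 = 4 * P z^3 - 48 * (1 + 8 * k^2) * P z - 64 * (1 - 20 * k^2 - 8 * k^4)"
    and lim: "((\<lambda>z. P z - 1 / z^2) \<longlongrightarrow> C) (at 0)"
    using assms(1) unfolding is_weierstrass_p_germ_def by blast
  define Q where "Q z = (if z = 0 then 1 else z^2 * P z) - 6 * z^2" for z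
  have hol_Q: "Q holomorphic_on ball 0 r"
    unfolding Q_def
    by (intro holomorphic_intros removable_double_pole[OF hol_P lim])
  moreover have "Q 0 = 1"
    by (simp add: Q_def)
  ultimately obtain \<rho> where "0 < \<rho>" "\<rho> \<le> r" and hol_Q': "(\<lambda>z. csqrt (Q z)) holomorphic_on ball 0 \<rho>"
    and Q_nz: "\<And>z. z \<in> ball 0 \<rho> \<Longrightarrow> csqrt (Q z) \<noteq> 0"
    using \<open>r > 0\<close> holomorphic_csqrt_near_one by metis
  define s where "s z = csqrt (Q z)" for z
  \<comment> \<open>\<open>v\<^sup>2 = 2(1 - k\<^sup>2) / (6 - P)\<close>, with the branch of the root fixed by \<open>v'(0) = c\<close>\<close>
  define v where "v z = c * z / s z" for z
  have hol_s: "s holomorphic_on ball 0 \<rho>"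
    using hol_Q' by (simp add: s_def [abs_def])
  have hol_v: "v holomorphic_on ball 0 \<rho>"
    unfolding v_def by (rule holomorphic_on_divide[OF _ hol_s]) (use Q_nz in \<open>auto simp: s_def\<close>)
  have "(s has_field_derivative deriv s 0) (at 0)"
    using \<open>0 < \<rho>\<close> by (intro holomorphic_derivI[OF hol_s]) auto
  moreover have "s 0 = 1"
    by (simp add: s_def Q_def)
  ultimately have "(v has_field_derivative c) (at 0)"
    unfolding v_def by (auto intro!: derivative_eq_intros)
  then have "deriv v 0 = c"
    by (rule DERIV_imp_deriv)
  have rel: "v z^2 * (6 - P z) = 2 * (1 - k^2)" if "z \<in> ball 0 \<rho> - {0}" for z
  proof -
    have "Q z = - (z^2 * (6 - P z))" "Q z \<noteq> 0"
      using that Q_nz[of z] by (auto simp: Q_def algebra_simps)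
    then show ?thesis
      by (simp add: v_def s_def power_divide power_mult_distrib c)
  qed
  have "(deriv v z)^2 = cheb_T 6 (v z) - (1 - 2 * k^2)" if "z \<in> ball 0 \<rho>" for z
  proof (cases "z = 0")
    case True
    then show ?thesis
      using \<open>deriv v 0 = c\<close> c by (simp add: v_def cheb_T_6)
  next
    case False
    show ?thesis
    proof (rule chebyshev_ode_from_weierstrass[where U = "ball 0 \<rho> - {0}"])
      show "P holomorphic_on ball 0 \<rho> - {0}" "v holomorphic_on ball 0 \<rho> - {0}"
        using hol_P hol_v \<open>\<rho> \<le> r\<close> by (auto intro: holomorphic_on_subset)
    qed (use that False P_ode rel \<open>\<rho> \<le> r\<close> \<open>k^2 \<noteq> 1\<close> in auto)
  qed
  then show ?thesis
    using that \<open>0 < \<rho>\<close> hol_v rel \<open>deriv v 0 = c\<close> by (simp add: v_def)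
qed

theorem theorem6:
  fixes \<kappa> :: real and w :: "complex \<Rightarrow> complex" and r :: real
    and P :: "complex \<Rightarrow> complex"
  assumes "0 < \<kappa>" and "\<kappa> < 1"
    and "r > 0" and "w holomorphic_on ball 0 r"
    and "\<forall>z \<in> ball 0 r. (deriv w z)^2 = cheb_T 6 (w z) - (1 - 2 * complex_of_real \<kappa>^2)"
    and "w 0 = 0"
    and "is_weierstrass_p_germ (48 * (1 + 8 * complex_of_real \<kappa>^2))
           (64 * (1 - 20 * complex_of_real \<kappa>^2 - 8 * complex_of_real \<kappa>^4)) P"
  shows "\<forall>\<^sub>F z in at 0.
           (1 + (2 * (w z)^2 - 1)) * (6 - P z) = 4 * complex_of_real (sqrt (1 - \<kappa>^2))^2"
proof -
  define k where "k = complex_of_real \<kappa>"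
  have "\<kappa>^2 < 1"
    using assms(1,2) by (simp add: abs_square_less_1)
  then have \<lambda>: "complex_of_real (sqrt (1 - \<kappa>^2))^2 = 1 - k^2" and "k^2 \<noteq> 1"
    by (simp_all add: k_def flip: of_real_power)
  have c: "(deriv w 0)^2 = - 2 * (1 - k^2)"
    using assms(3,5,6) by (simp add: k_def cheb_T_6)
  then have "deriv w 0 \<noteq> 0"
    using \<open>k^2 \<noteq> 1\<close> by auto
  have germ: "is_weierstrass_p_germ (48 * (1 + 8 * k^2)) (64 * (1 - 20 * k^2 - 8 * k^4)) P"
    using assms(7) by (simp add: k_def)
  obtain \<rho> v where "\<rho> > 0" and hol_v: "v holomorphic_on ball 0 \<rho>"
    and "v 0 = 0" "deriv v 0 = deriv w 0"
    and v_ode: "\<And>z. z \<in> ball 0 \<rho> \<Longrightarrow> (deriv v z)^2 = cheb_T 6 (v z) - (1 - 2 * k^2)"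
    and rel: "\<And>z. z \<in> ball 0 \<rho> - {0} \<Longrightarrow> v z^2 * (6 - P z) = 2 * (1 - k^2)"
    by (rule chebyshev_solution_from_weierstrass[OF germ c \<open>k^2 \<noteq> 1\<close>]) (rule that)
  have "\<forall>\<^sub>F z in nhds 0. w z = v z"
  proof (rule square_ode_unique_near[where H = "\<lambda>y. cheb_T 6 y - (1 - 2 * k^2)" and r = "min r \<rho>"])
    show "(\<lambda>y. cheb_T 6 y - (1 - 2 * k^2)) holomorphic_on UNIV"
      unfolding cheb_T_6 by (intro holomorphic_intros)
    show "w holomorphic_on ball 0 (min r \<rho>)" "v holomorphic_on ball 0 (min r \<rho>)"
      using assms(4) hol_v by (auto intro: holomorphic_on_subset)
  qed (use assms(3,5,6) \<open>\<rho> > 0\<close> \<open>v 0 = 0\<close> \<open>deriv v 0 = deriv w 0\<close> \<open>deriv w 0 \<noteq> 0\<close> v_ode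
       in \<open>auto simp: k_def\<close>)
  then have "\<forall>\<^sub>F z in at 0. w z = v z"
    by (simp add: eventually_nhds_conv_at)
  moreover have "\<forall>\<^sub>F z in at 0. z \<in> ball 0 \<rho> - {0}"
    using eventually_at_ball'[OF \<open>\<rho> > 0\<close>, of 0 UNIV] by simp
  ultimately show ?thesis
  proof eventually_elim
    case (elim z)
    then have "(1 + (2 * (w z)^2 - 1)) * (6 - P z) = 2 * (v z^2 * (6 - P z))"
      by simp
    also have "\<dots> = 4 * complex_of_real (sqrt (1 - \<kappa>^2))^2"
      using rel[OF \<open>z \<in> ball 0 \<rho> - {0}\<close>] by (simp add: \<lambda>)
    finally show ?case .
  qed
qed

end
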